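(* Let $N,P>0$ and $L\in\mathbb{Z}_{\ge2}$. If there is a $(P,N,L-1)$-list-decodable code $\mathcal{C}\subset\mathcal{B}^n(\sqrt{nP})$ of rate $R$, then there exists a code $\mathcal{C}'\subset\mathcal{S}^n(0,\sqrt{(n+1)P})\subset\mathbb{R}^{n+1}$ with $|\mathcal{C}'|=|\mathcal{C}|$ (so of rate $R$ asymptotically) which is $\left(P,\frac{nN}{n+1},L-1\right)$-list-decodable in $\mathbb{R}^{n+1}$, i.e. every ball in $\mathbb{R}^{n+1}$ of radius $\sqrt{(n+1)\cdot\frac{nN}{n+1}}=\sqrt{nN}$ contains at most $L-1$ points of $\mathcal{C}'$.
   Context: $\mathcal{B}^m(y,r)$ is the closed Euclidean ball in $\mathbb{R}^m$ of radius $r$ centered at $y$, $\mathcal{B}^m(r)=\mathcal{B}^m(0,r)$, and $\mathcal{S}^{m-1}(0,r)=\{x\in\mathbb{R}^m:\|x\|_2=r\}$. For $P,N>0$, $L\in\mathbb{Z}_{\ge2}$, a finite set $\mathcal{C}\subseteq\mathcal{B}^m(\sqrt{mP})$ is $(P,N,L-1)$-list-decodable if $|\mathcal{C}\cap\mathcal{B}^m(y,\sqrt{mN})|\le L-1$ for every $y\in\mathbb{R}^m$. Its rate is $\frac1m\ln|\mathcal{C}|$. *)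

theory Defs
  imports "HOL-Analysis.Analysis"
begin

definition list_decodable :: "real \<Rightarrow> real \<Rightarrow> nat \<Rightarrow> 'a::euclidean_space set \<Rightarrow> bool" where
  "list_decodable P N L C \<longleftrightarrow>
     finite C \<and> C \<subseteq> cball 0 (sqrt (real DIM('a) * P)) \<and>
     (\<forall>y. card (C \<inter> cball y (sqrt (real DIM('a) * N))) \<le> L - 1)"

definition code_rate :: "'a::euclidean_space set \<Rightarrow> real" where
  "code_rate C = ln (real (card C)) / real DIM('a)"

end

theory Submission
  imports Defs
begin

text \<open>Identify \<open>\<real>\<^sup>n\<close> with a coordinate hyperplane of \<open>\<real>\<^sup>n\<^sup>+\<^sup>1\<close> and lift every codeword
  \<open>x\<close> straight up, by the height \<open>sqrt ((n+1) P - |x|\<^sup>2)\<close>, onto the sphere of radius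
  \<open>sqrt ((n+1) P)\<close>; this is possible since \<open>|x|\<^sup>2 \<le> n P\<close>. Forgetting the new coordinate is
  1-Lipschitz and undoes the lift, so any ball of radius \<open>sqrt (n N)\<close> in \<open>\<real>\<^sup>n\<^sup>+\<^sup>1\<close> can
  contain only lifts of codewords lying in the ball of the same radius around its
  projection, i.e. at most \<open>L - 1\<close> of them.\<close>

lemma card_image_inter_cball_le:
  fixes f :: "'a::metric_space \<Rightarrow> 'b::metric_space"
  assumes "finite C"
    and "\<And>x. x \<in> C \<Longrightarrow> p (f x) = x"
    and "\<And>z w. dist (p z) (p w) \<le> dist z w"
  shows "card (f ` C \<inter> cball y r) \<le> card (C \<inter> cball (p y) r)"
proof -
  have "f ` C \<inter> cball y r \<subseteq> f ` (C \<inter> cball (p y) r)"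
  proof
    fix z assume "z \<in> f ` C \<inter> cball y r"
    then obtain x where x: "x \<in> C" "z = f x" and "dist y (f x) \<le> r" by auto
    then have "dist (p y) x \<le> r" using assms(2,3) by (metis order_trans)
    then show "z \<in> f ` (C \<inter> cball (p y) r)" using x by auto
  qed
  then have "card (f ` C \<inter> cball y r) \<le> card (f ` (C \<inter> cball (p y) r))"
    using assms(1) by (intro card_mono) auto
  also have "\<dots> \<le> card (C \<inter> cball (p y) r)"
    using assms(1) by (intro card_image_le) simp
  finally show ?thesis .
qed

lemma list_decodable_image:
  fixes f :: "'a::euclidean_space \<Rightarrow> 'b::euclidean_space"
  assumes "list_decodable P N L C"
    and "\<And>x. x \<in> C \<Longrightarrow> p (f x) = x"
    and "\<And>z w. dist (p z) (p w) \<le> dist z w"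
    and "f ` C \<subseteq> cball 0 (sqrt (real DIM('b) * P'))"
    and "real DIM('b) * N' = real DIM('a) * N"
  shows "list_decodable P' N' L (f ` C)"
  using assms card_image_inter_cball_le[of C p f] unfolding list_decodable_def
  by (metis (no_types, lifting) finite_imageI order_trans)

lemma obtain_coordinate_embedding:
  assumes "CARD('m) = CARD('n) + 1"
  obtains e :: "'n::finite \<Rightarrow> 'm::finite" and k where "inj e" and "range e = - {k}"
proof -
  fix k :: 'm
  have "card (- {k}) = CARD('n)"
    using assms by (simp add: Compl_eq_Diff_UNIV card_Diff_singleton)
  then obtain e :: "'n \<Rightarrow> 'm" where "bij_betw e UNIV (- {k})"
    by (metis finite finite_same_card_bij)
  then show thesis using that by (meson bij_betw_def)
qed

definition drop_coord :: "('n \<Rightarrow> 'm) \<Rightarrow> real ^ 'm \<Rightarrow> real ^ 'n" where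
  "drop_coord e z = (\<chi> j. z $ e j)"

definition extend_coord :: "('n \<Rightarrow> 'm) \<Rightarrow> 'm \<Rightarrow> real \<Rightarrow> real ^ 'n \<Rightarrow> real ^ 'm" where
  "extend_coord e k h x = (\<chi> i. if i = k then h else x $ inv e i)"

lemma drop_coord_extend_coord:
  assumes "inj e" and "range e = - {k}"
  shows "drop_coord e (extend_coord e k h x) = x"
  using assms by (auto simp: drop_coord_def extend_coord_def vec_eq_iff)

lemma power2_norm_vec_real: "(norm (x :: real ^ 'n))\<^sup>2 = (\<Sum>i\<in>UNIV. (x $ i)\<^sup>2)"
  unfolding power2_norm_eq_inner inner_vec_def by (simp add: power2_eq_square)

lemma dist_drop_coord_le:
  assumes "inj e"
  shows "dist (drop_coord e z) (drop_coord e w) \<le> dist z w"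
proof -
  have "(norm (drop_coord e z - drop_coord e w))\<^sup>2 = (\<Sum>i\<in>range e. ((z - w) $ i)\<^sup>2)"
    by (simp add: power2_norm_vec_real drop_coord_def sum.reindex[OF assms])
  also have "\<dots> \<le> (norm (z - w))\<^sup>2"
    unfolding power2_norm_vec_real by (intro sum_mono2) auto
  finally show ?thesis
    unfolding dist_norm by (rule power2_le_imp_le) simp
qed

lemma norm_extend_coord:
  assumes "inj e" and "range e = - {k}"
  shows "(norm (extend_coord e k h x))\<^sup>2 = h\<^sup>2 + (norm x)\<^sup>2"
proof -
  let ?z = "extend_coord e k h x"
  have "k \<notin> range e"
    using assms(2) by auto
  have "(norm ?z)\<^sup>2 = (?z $ k)\<^sup>2 + (\<Sum>i\<in>range e. (?z $ i)\<^sup>2)"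
    using sum.remove[of UNIV k "\<lambda>i. (?z $ i)\<^sup>2"] assms(2)
    by (simp add: power2_norm_vec_real Compl_eq_Diff_UNIV)
  also have "\<dots> = h\<^sup>2 + (\<Sum>j\<in>UNIV. (x $ j)\<^sup>2)"
  proof -
    have "?z $ e j = x $ j" for j
      using \<open>k \<notin> range e\<close> by (auto simp: extend_coord_def inv_f_f[OF assms(1)])
    then show ?thesis by (simp add: sum.reindex[OF assms(1)] extend_coord_def)
  qed
  finally show ?thesis by (simp add: power2_norm_vec_real)
qed

lemma norm_extend_coord_sphere:
  assumes "inj e" and "range e = - {k}" and "norm x \<le> r"
  shows "norm (extend_coord e k (sqrt (r\<^sup>2 - (norm x)\<^sup>2)) x) = r"
proof -
  have "0 \<le> r" using assms(3) norm_ge_zero order_trans by blast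
  moreover have "(norm x)\<^sup>2 \<le> r\<^sup>2" using assms(3) by (simp add: power_mono)
  ultimately have "(norm (extend_coord e k (sqrt (r\<^sup>2 - (norm x)\<^sup>2)) x))\<^sup>2 = r\<^sup>2"
    by (simp add: norm_extend_coord[OF assms(1,2)])
  then show ?thesis using \<open>0 \<le> r\<close> by (metis norm_ge_zero power2_eq_imp_eq)
qed

theorem mainTheorem3:
  fixes C :: "(real ^ 'n) set" and P N R :: real and L :: nat
  assumes "CARD('m) = CARD('n) + 1"
    and "P > 0" and "N > 0" and "L \<ge> 2"
    and "list_decodable P N L C"
    and "code_rate C = R"
  shows "\<exists>C' :: (real ^ 'm) set.
           C' \<subseteq> sphere 0 (sqrt (real (CARD('n) + 1) * P)) \<and>
           card C' = card C \<and>
           list_decodable P (real CARD('n) * N / real (CARD('n) + 1)) L C'"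
proof -
  obtain e :: "'n \<Rightarrow> 'm" and k where e: "inj e" and k: "range e = - {k}"
    using obtain_coordinate_embedding[OF assms(1)] .
  define r where "r = sqrt (real (CARD('n) + 1) * P)"
  define lift where "lift x = extend_coord e k (sqrt (r\<^sup>2 - (norm x)\<^sup>2)) x" for x
  have "C \<subseteq> cball 0 (sqrt (real CARD('n) * P))"
    using assms(5) by (simp add: list_decodable_def)
  moreover have "sqrt (real CARD('n) * P) \<le> r"
    unfolding r_def using assms(2) by simp
  ultimately have sphere: "lift ` C \<subseteq> sphere 0 r"
    using norm_extend_coord_sphere[OF e k] by (force simp: lift_def)
  have undo: "drop_coord e (lift x) = x" for x
    by (simp add: lift_def drop_coord_extend_coord[OF e k])
  have "card (lift ` C) = card C"
    using undo by (metis card_image inj_on_inverseI)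
  moreover have "list_decodable P (real CARD('n) * N / real (CARD('n) + 1)) L (lift ` C)"
  proof (rule list_decodable_image[where p = "drop_coord e"])
    show "lift ` C \<subseteq> cball 0 (sqrt (real DIM(real ^ 'm) * P))"
      using sphere assms(1) unfolding r_def by auto
    show "real DIM(real ^ 'm) * (real CARD('n) * N / real (CARD('n) + 1)) = real DIM(real ^ 'n) * N"
      using assms(1) by simp
  qed (use assms(5) undo dist_drop_coord_le[OF e] in auto)
  ultimately show ?thesis using sphere unfolding r_def by blast
qed

end
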